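(* Let $\mathbb{F}_q$ be a finite field, let $K,N,f,d$ be positive integers with $N \ge (K-1)d+3f+1$, and let $G_\mathcal{L}\in\mathbb{F}_q^{K\times N}$ be the Lagrange generator matrix defined in the context, with $i$-th column $(G_\mathcal{L})_i$. Let $\mathbf{B}=(b_{k,k'})_{k,k'\in[K]}$ and $\mathbf{B}'=(b'_{k,k'})_{k,k'\in[K]}$ be $K\times K$ arrays whose entries lie in $\mathbb{F}_q^{Q\times R}$. Suppose the $N$ nodes, indexed by $[N]$, are partitioned into correct nodes and at most $f$ Byzantine nodes, and suppose there exist sets $\mathcal{I},\mathcal{J}\subseteq[N]$ with $|\mathcal{I}|=|\mathcal{J}|=N-f$ such that for every correct node $i\in\mathcal{I}$ and every correct node $j\in\mathcal{J}$, $$w_{i,j}:=(G_\mathcal{L})_i^\intercal\,\mathbf{B}\,(G_\mathcal{L})_j \;=\; (G_\mathcal{L})_j^\intercal\,(\mathbf{B}')^\intercal\,(G_\mathcal{L})_i=:u_{j,i}.$$ (This is exactly what a valid $(N-f,N)$-threshold signature on the quorum identifier of $\mathcal{I}$ certifies in the protocol.) Then $\mathbf{B}=\mathbf{B}'$.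
   Context: Fix mutually disjoint sets of distinct elements $\{\alpha_1,\ldots,\alpha_N\}$ and $\{\omega_1,\ldots,\omega_K\}$ of $\mathbb{F}_q$. For $k\in[K]$ let $\Phi_k(z)=\prod_{j\in[K],j\ne k}\frac{z-\omega_j}{\omega_k-\omega_j}$, and let $G_\mathcal{L}$ be the $K\times N$ matrix with $(k,i)$ entry $\Phi_k(\alpha_i)$. For a $K\times K$ array $\mathbf{M}=(m_{k,k'})$ with entries in the $\mathbb{F}_q$-vector space $\mathbb{F}_q^{Q\times R}$ and column vectors $x,y\in\mathbb{F}_q^K$, $x^\intercal \mathbf{M} y$ denotes $\sum_{k,k'}x_k m_{k,k'}y_{k'}\in\mathbb{F}_q^{Q\times R}$, and $\mathbf{M}^\intercal$ denotes the $K\times K$ array whose $(k,k')$ entry is $m_{k',k}$ (entries themselves are not transposed). In the paper, $\mathbf{B}$ is the block from which node $i$'s coded outgoing strip $(G_\mathcal{L})_i^\intercal\mathbf{B}$ is formed and $\mathbf{B}'$ the block from which its coded incoming strip $(G_\mathcal{L})_i^\intercal(\mathbf{B}')^\intercal$ is formed; $d\ge 1$ is the degree of the verification polynomial. *)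

theory Defs
  imports Main
begin

text \<open>Nodes are indexed by 0..<N and the Lagrange points/basis by 0..<K.
  An element of F_q^(Q x R) is modelled as a function nat => nat => 'a,
  read on the index range q < Q, r < R.  A K x K array with such entries is
  a function nat => nat => (nat => nat => 'a).\<close>

definition lagrange_basis :: "(nat \<Rightarrow> 'a::field) \<Rightarrow> nat \<Rightarrow> nat \<Rightarrow> 'a \<Rightarrow> 'a" where
  "lagrange_basis \<omega> K k z = (\<Prod>j\<in>{0..<K} - {k}. (z - \<omega> j) / (\<omega> k - \<omega> j))"

definition GL :: "(nat \<Rightarrow> 'a::field) \<Rightarrow> (nat \<Rightarrow> 'a) \<Rightarrow> nat \<Rightarrow> nat \<Rightarrow> nat \<Rightarrow> 'a" where
  "GL \<alpha> \<omega> K k i = lagrange_basis \<omega> K k (\<alpha> i)"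

definition bilin :: "nat \<Rightarrow> (nat \<Rightarrow> 'a::field) \<Rightarrow> (nat \<Rightarrow> nat \<Rightarrow> nat \<Rightarrow> nat \<Rightarrow> 'a) \<Rightarrow> (nat \<Rightarrow> 'a)
    \<Rightarrow> nat \<Rightarrow> nat \<Rightarrow> 'a" where
  "bilin K x M y = (\<lambda>q r. \<Sum>k<K. \<Sum>k'<K. x k * M k k' q r * y k')"

text \<open>Array transpose (entries themselves are not transposed).\<close>
definition arr_T :: "(nat \<Rightarrow> nat \<Rightarrow> 'b) \<Rightarrow> nat \<Rightarrow> nat \<Rightarrow> 'b" where
  "arr_T M k k' = M k' k"

definition mat_eq :: "nat \<Rightarrow> nat \<Rightarrow> (nat \<Rightarrow> nat \<Rightarrow> 'a) \<Rightarrow> (nat \<Rightarrow> nat \<Rightarrow> 'a) \<Rightarrow> bool" where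
  "mat_eq Q R A A' \<longleftrightarrow> (\<forall>q<Q. \<forall>r<R. A q r = A' q r)"

end

theory Submission
  imports Defs "HOL-Computational_Algebra.Polynomial"
begin

text \<open>Fix an entry (q, r) and let D = B - B' there.  After transposing the right-hand side,
  the hypothesis says sum_{k,k'} Phi_k(x) D_{k,k'} Phi_{k'}(y) = 0 for all (x, y) in the grid
  alpha(I \<inter> C) \<times> alpha(J \<inter> C), whose sides have at least N - 2f \<ge> K points each.
  A combination of Phi_0, ..., Phi_{K-1} is a polynomial of degree < K whose value at omega_m
  is its m-th coefficient, so it is trivial as soon as it vanishes at K points.  Applying
  this first in y and then in x gives D = 0.\<close>

definition lagrange_basis_poly :: "(nat \<Rightarrow> 'a::field) \<Rightarrow> nat \<Rightarrow> nat \<Rightarrow> 'a poly" where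
  "lagrange_basis_poly \<omega> K k = (\<Prod>j\<in>{0..<K} - {k}. smult (inverse (\<omega> k - \<omega> j)) [:- \<omega> j, 1:])"

lemma poly_lagrange_basis_poly: "poly (lagrange_basis_poly \<omega> K k) x = lagrange_basis \<omega> K k x"
  unfolding lagrange_basis_poly_def lagrange_basis_def poly_prod
  by (intro prod.cong refl) (simp add: divide_inverse algebra_simps)

lemma degree_lagrange_basis_poly:
  assumes "k < K"
  shows "degree (lagrange_basis_poly \<omega> K k) \<le> K - 1"
proof -
  have "degree (lagrange_basis_poly \<omega> K k)
      \<le> (\<Sum>j\<in>{0..<K} - {k}. degree (smult (inverse (\<omega> k - \<omega> j)) [:- \<omega> j, 1:]))"
    unfolding lagrange_basis_poly_def by (rule degree_prod_sum_le[unfolded o_def]) simp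
  also have "\<dots> \<le> (\<Sum>j\<in>{0..<K} - {k}. 1)"
    by (intro sum_mono order_trans[OF degree_smult_le]) simp
  also have "\<dots> \<le> K - 1"
    using assms by simp
  finally show ?thesis .
qed

lemma lagrange_basis_at_node:
  assumes "inj_on \<omega> {0..<K}" "k < K" "m < K"
  shows "lagrange_basis \<omega> K k (\<omega> m) = (if k = m then 1 else (0::'a::field))"
proof (cases "k = m")
  case True
  have "(\<omega> k - \<omega> j) / (\<omega> k - \<omega> j) = 1" if "j \<in> {0..<K} - {k}" for j
    using assms that by (auto dest: inj_onD)
  with True show ?thesis
    unfolding lagrange_basis_def by simp
next
  case False
  with assms have "lagrange_basis \<omega> K k (\<omega> m) = 0"
    unfolding lagrange_basis_def by (intro prod_zero) auto
  with False show ?thesis by simp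
qed

lemma lagrange_combination_eq_0:
  fixes \<omega> c :: "nat \<Rightarrow> 'a::field"
  assumes inj: "inj_on \<omega> {0..<K}" and card: "K \<le> card X"
    and vanish: "\<And>x. x \<in> X \<Longrightarrow> (\<Sum>k<K. c k * lagrange_basis \<omega> K k x) = 0"
    and m: "m < K"
  shows "c m = 0"
proof -
  define P where "P = (\<Sum>k<K. smult (c k) (lagrange_basis_poly \<omega> K k))"
  have poly_P: "poly P x = (\<Sum>k<K. c k * lagrange_basis \<omega> K k x)" for x
    unfolding P_def by (simp add: poly_sum poly_lagrange_basis_poly)
  have "P = 0"
  proof (rule ccontr)
    assume "P \<noteq> 0"
    have "degree P \<le> K - 1"
      unfolding P_def
      by (intro degree_sum_le order_trans[OF degree_smult_le] degree_lagrange_basis_poly) auto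
    moreover have "card X \<le> card {x. poly P x = 0}"
      using vanish poly_roots_finite[OF \<open>P \<noteq> 0\<close>] by (intro card_mono) (auto simp: poly_P)
    moreover have "card {x. poly P x = 0} \<le> degree P"
      using \<open>P \<noteq> 0\<close> by (rule card_poly_roots_bound)
    ultimately show False
      using card m by linarith
  qed
  then have "0 = (\<Sum>k<K. c k * lagrange_basis \<omega> K k (\<omega> m))"
    by (simp flip: poly_P)
  also have "\<dots> = c m"
    using m by (simp add: lagrange_basis_at_node[OF inj] if_distrib sum.delta' cong: if_cong)
  finally show ?thesis by simp
qed

lemma lagrange_bilinear_eq_0:
  fixes \<omega> :: "nat \<Rightarrow> 'a::field" and D :: "nat \<Rightarrow> nat \<Rightarrow> 'a"
  assumes inj: "inj_on \<omega> {0..<K}" and "K \<le> card X" "K \<le> card Y"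
    and vanish: "\<And>x y. x \<in> X \<Longrightarrow> y \<in> Y \<Longrightarrow>
      (\<Sum>k<K. \<Sum>k'<K. lagrange_basis \<omega> K k x * D k k' * lagrange_basis \<omega> K k' y) = 0"
    and "k < K" "k' < K"
  shows "D k k' = 0"
proof -
  have rows: "(\<Sum>k'<K. D k k' * lagrange_basis \<omega> K k' y) = 0" if "y \<in> Y" for y
  proof (rule lagrange_combination_eq_0[OF inj \<open>K \<le> card X\<close> _ \<open>k < K\<close>])
    fix x assume "x \<in> X"
    from vanish[OF this \<open>y \<in> Y\<close>]
    show "(\<Sum>k<K. (\<Sum>k'<K. D k k' * lagrange_basis \<omega> K k' y) * lagrange_basis \<omega> K k x) = 0"
      by (simp add: sum_distrib_left sum_distrib_right mult_ac)
  qed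
  show ?thesis
    by (rule lagrange_combination_eq_0[OF inj \<open>K \<le> card Y\<close> rows \<open>k' < K\<close>])
qed

lemma bilin_arr_T: "bilin K y (arr_T M) x = bilin K x M y"
  unfolding bilin_def arr_T_def
  by (subst sum.swap) (simp add: mult_ac)

lemma mat_eq_bilin_diff_eq_0:
  assumes "mat_eq Q R (bilin K x M y) (bilin K x M' y)" "q < Q" "r < R"
  shows "(\<Sum>k<K. \<Sum>k'<K. x k * (M k k' q r - M' k k' q r) * y k') = 0"
  using assms unfolding mat_eq_def bilin_def
  by (simp add: right_diff_distrib left_diff_distrib sum_subtractf)

lemma card_image_inter_ge:
  fixes X C :: "nat set"
  assumes "inj_on \<alpha> {0..<N}" "X \<subseteq> {0..<N}" "card ({0..<N} - C) \<le> f"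
  shows "card X - f \<le> card (\<alpha> ` (X \<inter> C))"
proof -
  have "card X \<le> card ((X \<inter> C) \<union> ({0..<N} - C))"
    using assms(2) by (intro card_mono) (auto intro: finite_subset)
  also have "\<dots> \<le> card (X \<inter> C) + card ({0..<N} - C)"
    by (rule card_Un_le)
  also have "card (X \<inter> C) = card (\<alpha> ` (X \<inter> C))"
    using inj_on_subset[OF assms(1), of "X \<inter> C"] assms(2) by (simp add: card_image le_infI1)
  finally show ?thesis
    using assms(3) by linarith
qed

theorem lemma1:
  fixes \<alpha> \<omega> :: "nat \<Rightarrow> 'a::{finite, field}"
    and K N f d Q R :: nat
    and B B' :: "nat \<Rightarrow> nat \<Rightarrow> nat \<Rightarrow> nat \<Rightarrow> 'a"
    and C I J :: "nat set"
  assumes "K > 0" "N > 0" "f > 0" "d > 0"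
    and "N \<ge> (K - 1) * d + 3 * f + 1"
    and "inj_on \<alpha> {0..<N}" "inj_on \<omega> {0..<K}"
    and "\<alpha> ` {0..<N} \<inter> \<omega> ` {0..<K} = {}"
    and "C \<subseteq> {0..<N}" "card ({0..<N} - C) \<le> f"
    and "I \<subseteq> {0..<N}" "J \<subseteq> {0..<N}"
    and "card I = N - f" "card J = N - f"
    and "\<forall>i\<in>I \<inter> C. \<forall>j\<in>J \<inter> C.
           mat_eq Q R (bilin K (\<lambda>k. GL \<alpha> \<omega> K k i) B (\<lambda>k. GL \<alpha> \<omega> K k j))
                      (bilin K (\<lambda>k. GL \<alpha> \<omega> K k j) (arr_T B') (\<lambda>k. GL \<alpha> \<omega> K k i))"
  shows "\<forall>k<K. \<forall>k'<K. mat_eq Q R (B k k') (B' k k')"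
proof -
  have "K - 1 \<le> (K - 1) * d"
    using \<open>d > 0\<close> by simp
  then have "K \<le> card I - f" "K \<le> card J - f"
    using assms(5,13,14) by linarith+
  then have grid_size: "K \<le> card (\<alpha> ` (I \<inter> C))" "K \<le> card (\<alpha> ` (J \<inter> C))"
    using card_image_inter_ge[OF assms(6) _ assms(10)] assms(11,12) by (meson le_trans)+
  show ?thesis
    unfolding mat_eq_def
  proof (intro allI impI)
    fix k k' q r assume "k < K" "k' < K" "q < Q" "r < R"
    have "(\<Sum>k<K. \<Sum>k'<K. lagrange_basis \<omega> K k x * (B k k' q r - B' k k' q r)
            * lagrange_basis \<omega> K k' y) = 0"
      if xy: "x \<in> \<alpha> ` (I \<inter> C)" "y \<in> \<alpha> ` (J \<inter> C)" for x y
    proof -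
      obtain i j where ij: "i \<in> I \<inter> C" "j \<in> J \<inter> C" and "x = \<alpha> i" "y = \<alpha> j"
        using xy by blast
      have "mat_eq Q R (bilin K (\<lambda>k. GL \<alpha> \<omega> K k i) B (\<lambda>k. GL \<alpha> \<omega> K k j))
                       (bilin K (\<lambda>k. GL \<alpha> \<omega> K k i) B' (\<lambda>k. GL \<alpha> \<omega> K k j))"
        using assms(15) ij by (simp add: bilin_arr_T)
      from mat_eq_bilin_diff_eq_0[OF this \<open>q < Q\<close> \<open>r < R\<close>]
      show ?thesis
        by (simp add: GL_def \<open>x = \<alpha> i\<close> \<open>y = \<alpha> j\<close>)
    qed
    from lagrange_bilinear_eq_0[OF assms(7) grid_size this \<open>k < K\<close> \<open>k' < K\<close>]
    show "B k k' q r = B' k k' q r" by simp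
  qed
qed

end
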